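(* Let $\bm\Lambda=\mathrm{diag}(\lambda_1,\ldots,\lambda_d)$ with $\lambda_i\ge0$ and $\bm\Lambda\neq{\bm{0}}$, let $\eta>0$, $\beta\in[0,1)$, $\mu>0$, and consider ZO-GDM on $f_{\mathrm{quad}}({\bm{x}})=\tfrac12{\bm{x}}^\top\bm\Lambda{\bm{x}}$: \[ {\bm{m}}_{t+1}=\beta{\bm{m}}_t+\frac{f_{\mathrm{quad}}({\bm{x}}_t+\mu{\bm{u}}_t)-f_{\mathrm{quad}}({\bm{x}}_t-\mu{\bm{u}}_t)}{2\mu}{\bm{u}}_t,\qquad{\bm{x}}_{t+1}={\bm{x}}_t-\eta{\bm{m}}_{t+1}, \] with ${\bm{u}}_t\overset{\mathrm{i.i.d.}}{\sim}\mathcal N({\bm{0}},{\bm{I}}_d)$, ${\bm{u}}_t$ independent of $({\bm{x}}_t,{\bm{m}}_t)$. Writing ${\bm{x}}_t=(x_{1,t},\ldots,x_{d,t})$, ${\bm{m}}_t=(m_{1,t},\ldots,m_{d,t})$, define for each $t$ and $i$ \[ {\bm{W}}_{i,t}:=\begin{bmatrix}\mathbb{E}[x_{i,t}^2]&\mathbb{E}[\eta x_{i,t}m_{i,t}]\\ \mathbb{E}[\eta x_{i,t}m_{i,t}]&\mathbb{E}[\eta^2m_{i,t}^2]\end{bmatrix}. \] Then \[ {\bm{W}}_{i,t+1}={\bm{A}}_i{\bm{W}}_{i,t}{\bm{A}}_i^\top+\eta^2\Bigl(\lambda_i^2({\bm{W}}_{i,t})_{11}+\sum_{j=1}^d\lambda_j^2({\bm{W}}_{j,t})_{11}\Bigr){\bm{Q}},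 \] where ${\bm{A}}_i=\begin{bmatrix}1-\eta\lambda_i&-\beta\\ \eta\lambda_i&\beta\end{bmatrix}$ and ${\bm{Q}}=\begin{bmatrix}1&-1\\-1&1\end{bmatrix}$. *)

theory Defs
  imports "HOL-Probability.Probability"
begin

text \<open>The quadratic f_quad(x) = 1/2 x^T Lambda x with Lambda = diag(lam 0, ..., lam (d-1)).
  Vectors of R^d are represented as functions nat => real on the index set {..<d}.\<close>
definition fquad :: "nat \<Rightarrow> (nat \<Rightarrow> real) \<Rightarrow> (nat \<Rightarrow> real) \<Rightarrow> real" where
  "fquad d lam x = (1/2) * (\<Sum>i<d. lam i * (x i)^2)"

definition mat2 :: "real \<Rightarrow> real \<Rightarrow> real \<Rightarrow> real \<Rightarrow> real^2^2" where
  "mat2 a b c e = vector [vector [a, b], vector [c, e]]"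

text \<open>The second-moment matrix W_{i,t}; x t i and m t i are the i-th coordinates of x_t, m_t.\<close>
definition Wmat :: "'a measure \<Rightarrow> real \<Rightarrow> (nat \<Rightarrow> nat \<Rightarrow> 'a \<Rightarrow> real) \<Rightarrow> (nat \<Rightarrow> nat \<Rightarrow> 'a \<Rightarrow> real)
    \<Rightarrow> nat \<Rightarrow> nat \<Rightarrow> real^2^2" where
  "Wmat M \<eta> x m i t =
     mat2 (integral\<^sup>L M (\<lambda>\<omega>. (x t i \<omega>)^2))
          (integral\<^sup>L M (\<lambda>\<omega>. \<eta> * x t i \<omega> * m t i \<omega>))
          (integral\<^sup>L M (\<lambda>\<omega>. \<eta> * x t i \<omega> * m t i \<omega>))
          (integral\<^sup>L M (\<lambda>\<omega>. \<eta>^2 * (m t i \<omega>)^2))"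

definition Amat :: "real \<Rightarrow> real \<Rightarrow> real \<Rightarrow> real^2^2" where
  "Amat \<eta> \<beta> l = mat2 (1 - \<eta> * l) (- \<beta>) (\<eta> * l) \<beta>"

definition Qmat :: "real^2^2" where
  "Qmat = mat2 1 (-1) (-1) 1"

end

theory Submission
  imports Defs
begin

text \<open>For a quadratic the central difference quotient is exact: it equals the directional
  derivative g = u^T \<Lambda> x (writing x, m, u for x_t, m_t, u_t and primes for step t + 1), so m' = \<beta> m + g u. As u is standard Gaussian and independent of (x, m),
  E[u_j u_i] = \<delta>_ji and E[u_j u_k u_i^2] = \<delta>_jk (1 + 2 \<delta>_ji); hence E[z g u_i] = \<lambda>_i E[z x_i] for
  every state coordinate z, and E[g^2 u_i^2] = \<Sum>_j \<lambda>_j^2 E[x_j^2] + 2 \<lambda>_i^2 E[x_i^2]. Substituting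
  these into the second moments of x' = x - \<eta> m' and m' gives the recursion. The same computation
  shows, by induction on t, that all iterates are square integrable, so every expectation involved
  is finite.\<close>

lemma fquad_central_difference:
  "fquad d lam (\<lambda>j. a j + \<mu> * b j) - fquad d lam (\<lambda>j. a j - \<mu> * b j)
     = 2 * \<mu> * (\<Sum>j<d. lam j * a j * b j)"
  unfolding fquad_def
  by (simp add: sum_subtractf[symmetric] sum_distrib_left power2_eq_square algebra_simps)

lemma integrable_mult_of_square_integrable:
  fixes f g :: "'a \<Rightarrow> real"
  assumes [measurable]: "f \<in> borel_measurable M" "g \<in> borel_measurable M"
    and "integrable M (\<lambda>\<omega>. f \<omega>^2)" "integrable M (\<lambda>\<omega>. g \<omega>^2)"
  shows "integrable M (\<lambda>\<omega>. f \<omega> * g \<omega>)"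
proof (rule Bochner_Integration.integrable_bound)
  show "integrable M (\<lambda>\<omega>. f \<omega>^2 + g \<omega>^2)"
    using assms by auto
  have "\<bar>a * b\<bar> \<le> a^2 + b^2" for a b :: real
  proof -
    have "2 * \<bar>a * b\<bar> \<le> a^2 + b^2"
      using sum_squares_bound[of "\<bar>a\<bar>" "\<bar>b\<bar>"] by (simp add: abs_mult mult.assoc)
    then show ?thesis
      using abs_ge_zero[of "a * b"] by linarith
  qed
  then show "AE \<omega> in M. norm (f \<omega> * g \<omega>) \<le> norm (f \<omega>^2 + g \<omega>^2)"
    by (intro AE_I2) simp
qed auto

lemma prod_power_of_bool:
  fixes f :: "'b \<Rightarrow> 'a::comm_monoid_mult"
  assumes "finite I" "a \<in> I"
  shows "(\<Prod>l\<in>I. f l ^ of_bool (l = a)) = f a"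
proof -
  have "(\<Prod>l\<in>I. f l ^ of_bool (l = a)) = (\<Prod>l\<in>I. if l = a then f l else 1)"
    by (rule prod.cong) auto
  then show ?thesis
    using assms by simp
qed

definition std_normal_moment :: "nat \<Rightarrow> real" where
  "std_normal_moment n = (LINT z|lborel. std_normal_density z * z ^ n)"

lemma std_normal_moment_eq:
  "std_normal_moment n = (if odd n then 0 else fact n / (2 ^ (n div 2) * fact (n div 2)))"
  using integral_std_normal_moment_even[of "n div 2"] integral_std_normal_moment_odd[of "n div 2"]
  by (auto simp: std_normal_moment_def elim!: evenE oddE)

lemma (in prob_space) has_bochner_integral_indep_std_normal_monomial:
  assumes "finite I" and indep: "indep_vars (\<lambda>_. borel) X I"
    and normal: "\<And>i. i \<in> I \<Longrightarrow> distributed M lborel (X i) (\<lambda>z. ennreal (std_normal_density z))"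
  shows "has_bochner_integral M (\<lambda>\<omega>. \<Prod>i\<in>I. X i \<omega> ^ p i)
           (\<Prod>i\<in>I. std_normal_moment (p i))"
proof -
  have moment: "has_bochner_integral M (\<lambda>\<omega>. X i \<omega> ^ p i) (std_normal_moment (p i))"
    if "i \<in> I" for i
    using distributed_integrable[OF normal[OF that], of "\<lambda>z. z ^ p i"]
      distributed_integral[OF normal[OF that], of "\<lambda>z. z ^ p i"]
    by (simp add: has_bochner_integral_iff integrable_std_normal_moment std_normal_moment_def)
  have indep_powers: "indep_vars (\<lambda>_. borel) (\<lambda>i \<omega>. X i \<omega> ^ p i) I"
    by (rule indep_vars_compose2[OF indep]) auto
  have integrable_powers: "\<And>i. i \<in> I \<Longrightarrow> integrable M (\<lambda>\<omega>. X i \<omega> ^ p i)"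
    using moment by (simp add: has_bochner_integral_iff)
  have "expectation (\<lambda>\<omega>. \<Prod>i\<in>I. X i \<omega> ^ p i) = (\<Prod>i\<in>I. expectation (\<lambda>\<omega>. X i \<omega> ^ p i))"
    by (rule indep_vars_lebesgue_integral[OF \<open>finite I\<close> indep_powers integrable_powers])
  also have "\<dots> = (\<Prod>i\<in>I. std_normal_moment (p i))"
    using moment by (simp add: has_bochner_integral_iff)
  finally show ?thesis
    using indep_vars_integrable[OF \<open>finite I\<close> indep_powers integrable_powers]
    by (simp add: has_bochner_integral_iff)
qed

lemma (in prob_space) has_bochner_integral_indep_std_normal_second_moment:
  assumes "finite I" "indep_vars (\<lambda>_. borel) X I"
    and "\<And>i. i \<in> I \<Longrightarrow> distributed M lborel (X i) (\<lambda>z. ennreal (std_normal_density z))"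
    and "i \<in> I" "j \<in> I"
  shows "has_bochner_integral M (\<lambda>\<omega>. X j \<omega> * X i \<omega>) (of_bool (j = i))"
proof -
  let ?p = "\<lambda>l. of_bool (l = j) + of_bool (l = i)"
  have monomial: "(\<lambda>\<omega>. X j \<omega> * X i \<omega>) = (\<lambda>\<omega>. \<Prod>l\<in>I. X l \<omega> ^ ?p l)"
    using assms by (simp add: power_add prod.distrib prod_power_of_bool)
  have "(\<Prod>l\<in>I. std_normal_moment (?p l)) = (\<Prod>l\<in>{j, i}. std_normal_moment (?p l))"
    using assms by (intro prod.mono_neutral_right) (auto simp: std_normal_moment_eq)
  also have "\<dots> = of_bool (j = i)"
    by (cases "j = i") (simp_all add: std_normal_moment_eq)
  finally have moments: "(\<Prod>l\<in>I. std_normal_moment (?p l)) = of_bool (j = i)" .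
  show ?thesis
    using has_bochner_integral_indep_std_normal_monomial[OF assms(1-3), of ?p]
    unfolding monomial moments .
qed

lemma (in prob_space) has_bochner_integral_indep_std_normal_fourth_moment:
  assumes "finite I" "indep_vars (\<lambda>_. borel) X I"
    and "\<And>i. i \<in> I \<Longrightarrow> distributed M lborel (X i) (\<lambda>z. ennreal (std_normal_density z))"
    and "i \<in> I" "j \<in> I" "k \<in> I"
  shows "has_bochner_integral M (\<lambda>\<omega>. X j \<omega> * X k \<omega> * X i \<omega> ^ 2)
           (if j = k then if j = i then 3 else 1 else 0)"
proof -
  let ?p = "\<lambda>l. of_bool (l = j) + of_bool (l = k) + 2 * of_bool (l = i)"
  have monomial: "(\<lambda>\<omega>. X j \<omega> * X k \<omega> * X i \<omega> ^ 2) = (\<lambda>\<omega>. \<Prod>l\<in>I. X l \<omega> ^ ?p l)"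
    using assms by (simp add: power_add power_mult prod.distrib prod_power_of_bool)
  have "(\<Prod>l\<in>I. std_normal_moment (?p l)) = (\<Prod>l\<in>{j, k, i}. std_normal_moment (?p l))"
    using assms by (intro prod.mono_neutral_right) (auto simp: std_normal_moment_eq)
  also have "\<dots> = (if j = k then if j = i then 3 else 1 else 0)"
    by (cases "j = k"; cases "j = i"; cases "k = i") (simp_all add: std_normal_moment_eq)
  finally have moments:
    "(\<Prod>l\<in>I. std_normal_moment (?p l)) = (if j = k then if j = i then 3 else 1 else 0)" .
  show ?thesis
    using has_bochner_integral_indep_std_normal_monomial[OF assms(1-3), of ?p]
    unfolding monomial moments .
qed

lemma sum_fourth_moment_weights:
  fixes a :: "nat \<Rightarrow> 'a::comm_ring_1"
  assumes "i < d"
  shows "(\<Sum>j<d. \<Sum>k<d. a j * a k * ((if j = k then if j = i then 3 else 1 else 0) * e j k))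
    = (\<Sum>j<d. a j^2 * e j j) + 2 * a i^2 * e i i"
proof -
  have "(\<Sum>k<d. a j * a k * ((if j = k then if j = i then 3 else 1 else 0) * e j k))
      = a j^2 * e j j + (if j = i then 2 * a i^2 * e i i else 0)" if "j < d" for j
  proof -
    have "(\<Sum>k<d. a j * a k * ((if j = k then if j = i then 3 else 1 else 0) * e j k))
        = (\<Sum>k<d. if k = j then (if j = i then 3 else 1) * a j^2 * e j j else 0)"
      by (rule sum.cong) (auto simp: power2_eq_square)
    then show ?thesis
      using that by (simp add: algebra_simps)
  qed
  then have "(\<Sum>j<d. \<Sum>k<d. a j * a k * ((if j = k then if j = i then 3 else 1 else 0) * e j k))
      = (\<Sum>j<d. a j^2 * e j j + (if j = i then 2 * a i^2 * e i i else 0))"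
    by (intro sum.cong) auto
  then show ?thesis
    using assms by (simp add: sum.distrib)
qed

text \<open>With p = E[\<eta> x m'] and q = E[\<eta>^2 m'^2], the right-hand side is the second-moment
  matrix of (x - \<eta> m', \<eta> m').\<close>

lemma Amat_congruence:
  assumes "p = \<eta> * l * a + \<beta> * b"
    and "q = (\<eta> * l)^2 * a + 2 * \<eta> * l * \<beta> * b + \<beta>^2 * c + s"
  shows "Amat \<eta> \<beta> l ** mat2 a b b c ** transpose (Amat \<eta> \<beta> l) + s *\<^sub>R Qmat
    = mat2 (a - 2 * p + q) (p - q) (p - q) q"
  using assms unfolding Amat_def Qmat_def mat2_def
  by (simp add: vec_eq_iff forall_2 matrix_matrix_mult_def transpose_def sum_2 vector_def
      power2_eq_square algebra_simps)

locale zo_gdm_quadratic = prob_space M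
  for M :: "'a measure" +
  fixes d :: nat and lam :: "nat \<Rightarrow> real" and \<eta> \<beta> \<mu> :: real
    and x m u :: "nat \<Rightarrow> nat \<Rightarrow> 'a \<Rightarrow> real"
  assumes mu_pos: "\<mu> > 0"
    and x0_meas: "\<And>i. i < d \<Longrightarrow> x 0 i \<in> borel_measurable M"
    and m0_meas: "\<And>i. i < d \<Longrightarrow> m 0 i \<in> borel_measurable M"
    and x0_sq: "\<And>i. i < d \<Longrightarrow> integrable M (\<lambda>\<omega>. (x 0 i \<omega>)^2)"
    and m0_sq: "\<And>i. i < d \<Longrightarrow> integrable M (\<lambda>\<omega>. (m 0 i \<omega>)^2)"
    and u_normal: "\<And>t i. i < d \<Longrightarrow>
          distributed M lborel (u t i) (\<lambda>z. ennreal (std_normal_density z))"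
    and u_coord_indep: "\<And>t. indep_vars (\<lambda>_. borel) (u t) {..<d}"
    and u_indep_state: "\<And>t. indep_var
          (PiM {..<d} (\<lambda>_. borel)) (\<lambda>\<omega>. \<lambda>i\<in>{..<d}. u t i \<omega>)
          (PiM {..<2*d} (\<lambda>_. borel))
          (\<lambda>\<omega>. \<lambda>k\<in>{..<2*d}. if k < d then x t k \<omega> else m t (k - d) \<omega>)"
    and m_step: "\<And>t i \<omega>. i < d \<Longrightarrow>
          m (Suc t) i \<omega> = \<beta> * m t i \<omega>
            + (fquad d lam (\<lambda>j. x t j \<omega> + \<mu> * u t j \<omega>)
               - fquad d lam (\<lambda>j. x t j \<omega> - \<mu> * u t j \<omega>)) / (2 * \<mu>) * u t i \<omega>"
    and x_step: "\<And>t i \<omega>. i < d \<Longrightarrow> x (Suc t) i \<omega> = x t i \<omega> - \<eta> * m (Suc t) i \<omega>"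
begin

definition state :: "nat \<Rightarrow> nat \<Rightarrow> 'a \<Rightarrow> real" where
  "state t k \<omega> = (if k < d then x t k \<omega> else m t (k - d) \<omega>)"

definition dir_deriv :: "nat \<Rightarrow> 'a \<Rightarrow> real" where
  "dir_deriv t \<omega> = (\<Sum>j<d. lam j * x t j \<omega> * u t j \<omega>)"

lemma m_Suc: "i < d \<Longrightarrow> m (Suc t) i \<omega> = \<beta> * m t i \<omega> + dir_deriv t \<omega> * u t i \<omega>"
  using m_step fquad_central_difference mu_pos by (simp add: dir_deriv_def)

lemma u_measurable [measurable]: "i < d \<Longrightarrow> u t i \<in> borel_measurable M"
  using u_normal by (metis distributed_measurable measurable_lborel1)

lemma dir_deriv_measurable [measurable]:
  assumes "\<And>j. j < d \<Longrightarrow> x t j \<in> borel_measurable M"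
  shows "dir_deriv t \<in> borel_measurable M"
  using assms unfolding dir_deriv_def by measurable

lemma x_m_measurable: "i < d \<Longrightarrow> x t i \<in> borel_measurable M \<and> m t i \<in> borel_measurable M"
proof (induction t arbitrary: i)
  case 0
  then show ?case
    using x0_meas m0_meas by blast
next
  case (Suc t)
  have [measurable]: "\<And>j. j < d \<Longrightarrow> x t j \<in> borel_measurable M"
    and [measurable]: "m t i \<in> borel_measurable M"
    using Suc by auto
  have "m (Suc t) i = (\<lambda>\<omega>. \<beta> * m t i \<omega> + dir_deriv t \<omega> * u t i \<omega>)"
    using m_Suc Suc.prems by auto
  moreover have "x (Suc t) i = (\<lambda>\<omega>. x t i \<omega> - \<eta> * m (Suc t) i \<omega>)"
    using x_step Suc.prems by auto
  ultimately show ?case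
    using Suc.prems by simp
qed

lemma x_measurable [measurable]: "i < d \<Longrightarrow> x t i \<in> borel_measurable M"
  and m_measurable [measurable]: "i < d \<Longrightarrow> m t i \<in> borel_measurable M"
  using x_m_measurable by auto

lemma state_x [simp]: "j < d \<Longrightarrow> state t j = x t j"
  and state_m [simp]: "state t (d + j) = m t j"
  by (auto simp: state_def fun_eq_iff)

lemma state_measurable [measurable]: "k < 2 * d \<Longrightarrow> state t k \<in> borel_measurable M"
  by (cases "k < d") (simp_all add: state_def[abs_def])

lemma has_bochner_integral_u_mult_state_mult:
  assumes F: "F \<in> borel_measurable (PiM {..<d} (\<lambda>_. borel))"
    and F_integral: "has_bochner_integral M (\<lambda>\<omega>. F (\<lambda>i\<in>{..<d}. u t i \<omega>)) c"
    and kl: "k < 2 * d" "l < 2 * d"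
    and L2: "\<And>k. k < 2 * d \<Longrightarrow> integrable M (\<lambda>\<omega>. state t k \<omega> ^ 2)"
  shows "has_bochner_integral M (\<lambda>\<omega>. F (\<lambda>i\<in>{..<d}. u t i \<omega>) * (state t k \<omega> * state t l \<omega>))
           (c * expectation (\<lambda>\<omega>. state t k \<omega> * state t l \<omega>))"
proof -
  have G: "(\<lambda>v. v k * v l) \<in> borel_measurable (PiM {..<2 * d} (\<lambda>_. borel :: real measure))"
    using kl by (intro borel_measurable_times measurable_component_singleton) auto
  have "indep_var borel (\<lambda>\<omega>. F (\<lambda>i\<in>{..<d}. u t i \<omega>)) borel (\<lambda>\<omega>. state t k \<omega> * state t l \<omega>)"
    using indep_var_compose[OF u_indep_state[of t] F G] kl by (simp add: comp_def state_def)
  moreover have "integrable M (\<lambda>\<omega>. state t k \<omega> * state t l \<omega>)"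
    using kl L2 by (intro integrable_mult_of_square_integrable) auto
  ultimately show ?thesis
    using F_integral indep_var_lebesgue_integral indep_var_integrable
    by (auto simp: has_bochner_integral_iff)
qed

lemma has_bochner_integral_state_dir_deriv_u:
  assumes L2: "\<And>k. k < 2 * d \<Longrightarrow> integrable M (\<lambda>\<omega>. state t k \<omega> ^ 2)"
    and "k < 2 * d" "i < d"
  shows "has_bochner_integral M (\<lambda>\<omega>. state t k \<omega> * (dir_deriv t \<omega> * u t i \<omega>))
           (lam i * expectation (\<lambda>\<omega>. state t k \<omega> * x t i \<omega>))"
proof -
  have "has_bochner_integral M (\<lambda>\<omega>. u t j \<omega> * u t i \<omega> * (state t k \<omega> * state t j \<omega>))
      (of_bool (j = i) * expectation (\<lambda>\<omega>. state t k \<omega> * state t j \<omega>))" if "j < d" for j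
    using has_bochner_integral_u_mult_state_mult[of "\<lambda>v. v j * v i" t _ k j, OF _ _ _ _ L2]
      has_bochner_integral_indep_std_normal_second_moment[OF _ u_coord_indep u_normal, of i j]
      assms that
    by simp
  then have "has_bochner_integral M
      (\<lambda>\<omega>. \<Sum>j<d. lam j * (u t j \<omega> * u t i \<omega> * (state t k \<omega> * state t j \<omega>)))
      (\<Sum>j<d. lam j * (of_bool (j = i) * expectation (\<lambda>\<omega>. state t k \<omega> * state t j \<omega>)))"
    by (intro has_bochner_integral_sum has_bochner_integral_mult_right) simp
  moreover have "(\<Sum>j<d. lam j * (u t j \<omega> * u t i \<omega> * (state t k \<omega> * state t j \<omega>)))
      = state t k \<omega> * (dir_deriv t \<omega> * u t i \<omega>)" for \<omega>
    unfolding dir_deriv_def sum_distrib_left sum_distrib_right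
    by (intro sum.cong) (simp_all add: mult_ac)
  moreover have "(\<Sum>j<d. lam j * (of_bool (j = i) * expectation (\<lambda>\<omega>. state t k \<omega> * state t j \<omega>)))
      = lam i * expectation (\<lambda>\<omega>. state t k \<omega> * x t i \<omega>)"
    using assms by (simp add: mult.left_commute[of "lam _"])
  ultimately show ?thesis
    by simp
qed

lemma has_bochner_integral_dir_deriv_u_sq:
  assumes L2: "\<And>k. k < 2 * d \<Longrightarrow> integrable M (\<lambda>\<omega>. state t k \<omega> ^ 2)"
    and "i < d"
  shows "has_bochner_integral M (\<lambda>\<omega>. (dir_deriv t \<omega> * u t i \<omega>)^2)
           ((\<Sum>j<d. lam j^2 * expectation (\<lambda>\<omega>. x t j \<omega>^2))
              + 2 * lam i^2 * expectation (\<lambda>\<omega>. x t i \<omega>^2))"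
proof -
  let ?c = "\<lambda>j k. if j = k then if j = i then 3 else 1 else 0 :: real"
  have "has_bochner_integral M (\<lambda>\<omega>. u t j \<omega> * u t k \<omega> * u t i \<omega>^2 * (x t j \<omega> * x t k \<omega>))
      (?c j k * expectation (\<lambda>\<omega>. x t j \<omega> * x t k \<omega>))" if "j < d" "k < d" for j k
    using has_bochner_integral_u_mult_state_mult[of "\<lambda>v. v j * v k * v i^2" t _ j k, OF _ _ _ _ L2]
      has_bochner_integral_indep_std_normal_fourth_moment[OF _ u_coord_indep u_normal, of i j k]
      assms that
    by simp
  then have "has_bochner_integral M
      (\<lambda>\<omega>. \<Sum>j<d. \<Sum>k<d. lam j * lam k *
         (u t j \<omega> * u t k \<omega> * u t i \<omega>^2 * (x t j \<omega> * x t k \<omega>)))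
      (\<Sum>j<d. \<Sum>k<d. lam j * lam k * (?c j k * expectation (\<lambda>\<omega>. x t j \<omega> * x t k \<omega>)))"
    by (intro has_bochner_integral_sum has_bochner_integral_mult_right) simp
  moreover have "(dir_deriv t \<omega> * u t i \<omega>)^2 = (\<Sum>j<d. \<Sum>k<d. lam j * lam k *
         (u t j \<omega> * u t k \<omega> * u t i \<omega>^2 * (x t j \<omega> * x t k \<omega>)))" for \<omega>
  proof -
    have "(dir_deriv t \<omega> * u t i \<omega>)^2 = dir_deriv t \<omega> * dir_deriv t \<omega> * u t i \<omega>^2"
      by (simp add: power2_eq_square)
    also have "\<dots> = (\<Sum>j<d. \<Sum>k<d. lam j * lam k *
         (u t j \<omega> * u t k \<omega> * u t i \<omega>^2 * (x t j \<omega> * x t k \<omega>)))"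
      unfolding dir_deriv_def sum_product by (simp add: sum_distrib_left sum_distrib_right mult_ac)
    finally show ?thesis .
  qed
  moreover have "(\<Sum>j<d. \<Sum>k<d. lam j * lam k * (?c j k * expectation (\<lambda>\<omega>. x t j \<omega> * x t k \<omega>)))
      = (\<Sum>j<d. lam j^2 * expectation (\<lambda>\<omega>. x t j \<omega>^2))
          + 2 * lam i^2 * expectation (\<lambda>\<omega>. x t i \<omega>^2)"
    using sum_fourth_moment_weights[OF \<open>i < d\<close>, of lam "\<lambda>j k. expectation (\<lambda>\<omega>. x t j \<omega> * x t k \<omega>)"]
    by (simp add: power2_eq_square)
  ultimately show ?thesis
    by simp
qed

lemma has_bochner_integral_x_m_Suc:
  assumes L2: "\<And>k. k < 2 * d \<Longrightarrow> integrable M (\<lambda>\<omega>. state t k \<omega> ^ 2)"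
    and "i < d"
  shows "has_bochner_integral M (\<lambda>\<omega>. x t i \<omega> * m (Suc t) i \<omega>)
           (\<beta> * expectation (\<lambda>\<omega>. x t i \<omega> * m t i \<omega>) + lam i * expectation (\<lambda>\<omega>. x t i \<omega>^2))"
proof -
  have "integrable M (\<lambda>\<omega>. x t i \<omega> * m t i \<omega>)"
    using L2[of i] L2[of "d + i"] assms by (intro integrable_mult_of_square_integrable) auto
  then have "has_bochner_integral M
      (\<lambda>\<omega>. \<beta> * (x t i \<omega> * m t i \<omega>) + x t i \<omega> * (dir_deriv t \<omega> * u t i \<omega>))
      (\<beta> * expectation (\<lambda>\<omega>. x t i \<omega> * m t i \<omega>) + lam i * expectation (\<lambda>\<omega>. x t i \<omega>^2))"
    using has_bochner_integral_state_dir_deriv_u[OF L2, of i i] assms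
    by (intro has_bochner_integral_add has_bochner_integral_mult_right)
      (auto simp: has_bochner_integral_iff power2_eq_square)
  then show ?thesis
    using assms by (simp add: m_Suc algebra_simps)
qed

lemma has_bochner_integral_m_Suc_sq:
  assumes L2: "\<And>k. k < 2 * d \<Longrightarrow> integrable M (\<lambda>\<omega>. state t k \<omega> ^ 2)"
    and "i < d"
  shows "has_bochner_integral M (\<lambda>\<omega>. m (Suc t) i \<omega>^2)
           (\<beta>^2 * expectation (\<lambda>\<omega>. m t i \<omega>^2)
             + 2 * \<beta> * lam i * expectation (\<lambda>\<omega>. x t i \<omega> * m t i \<omega>)
             + (\<Sum>j<d. lam j^2 * expectation (\<lambda>\<omega>. x t j \<omega>^2))
             + 2 * lam i^2 * expectation (\<lambda>\<omega>. x t i \<omega>^2))"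
proof -
  have "has_bochner_integral M
      (\<lambda>\<omega>. \<beta>^2 * m t i \<omega>^2 + 2 * \<beta> * (m t i \<omega> * (dir_deriv t \<omega> * u t i \<omega>))
         + (dir_deriv t \<omega> * u t i \<omega>)^2)
      (\<beta>^2 * expectation (\<lambda>\<omega>. m t i \<omega>^2)
         + 2 * \<beta> * (lam i * expectation (\<lambda>\<omega>. m t i \<omega> * x t i \<omega>))
         + ((\<Sum>j<d. lam j^2 * expectation (\<lambda>\<omega>. x t j \<omega>^2))
              + 2 * lam i^2 * expectation (\<lambda>\<omega>. x t i \<omega>^2)))"
    using L2[of "d + i"] has_bochner_integral_state_dir_deriv_u[OF L2, of "d + i" i]
      has_bochner_integral_dir_deriv_u_sq[OF L2] assms
    by (intro has_bochner_integral_add has_bochner_integral_mult_right)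
      (auto simp: has_bochner_integral_iff)
  then show ?thesis
    using assms by (simp add: m_Suc power2_eq_square algebra_simps)
qed

lemma x_m_square_integrable:
  "i < d \<Longrightarrow> integrable M (\<lambda>\<omega>. x t i \<omega>^2) \<and> integrable M (\<lambda>\<omega>. m t i \<omega>^2)"
proof (induction t arbitrary: i)
  case 0
  then show ?case
    using x0_sq m0_sq by blast
next
  case (Suc t)
  have L2: "integrable M (\<lambda>\<omega>. state t k \<omega> ^ 2)" if "k < 2 * d" for k
    using Suc.IH that by (cases "k < d") (auto simp: state_def)
  have "(\<lambda>\<omega>. x (Suc t) i \<omega>^2)
      = (\<lambda>\<omega>. x t i \<omega>^2 - 2 * \<eta> * (x t i \<omega> * m (Suc t) i \<omega>) + \<eta>^2 * m (Suc t) i \<omega>^2)"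
    using Suc.prems by (simp add: x_step power2_eq_square algebra_simps)
  then show ?case
    using Suc.IH Suc.prems has_bochner_integral_x_m_Suc[OF L2] has_bochner_integral_m_Suc_sq[OF L2]
    by (auto simp: has_bochner_integral_iff)
qed

lemma state_square_integrable: "k < 2 * d \<Longrightarrow> integrable M (\<lambda>\<omega>. state t k \<omega> ^ 2)"
  using x_m_square_integrable by (cases "k < d") (auto simp: state_def)

lemma Wmat_Suc_eq_mat2:
  assumes "i < d"
    and xm: "has_bochner_integral M (\<lambda>\<omega>. \<eta> * x t i \<omega> * m (Suc t) i \<omega>) p"
    and mm: "has_bochner_integral M (\<lambda>\<omega>. \<eta>^2 * m (Suc t) i \<omega>^2) q"
  shows "Wmat M \<eta> x m i (Suc t)
    = mat2 (expectation (\<lambda>\<omega>. x t i \<omega>^2) - 2 * p + q) (p - q) (p - q) q"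
proof -
  have "(\<lambda>\<omega>. x (Suc t) i \<omega>^2)
      = (\<lambda>\<omega>. x t i \<omega>^2 - 2 * (\<eta> * x t i \<omega> * m (Suc t) i \<omega>) + \<eta>^2 * m (Suc t) i \<omega>^2)"
    using assms by (simp add: x_step power2_eq_square algebra_simps)
  then have "has_bochner_integral M (\<lambda>\<omega>. x (Suc t) i \<omega>^2)
      (expectation (\<lambda>\<omega>. x t i \<omega>^2) - 2 * p + q)"
    using x_m_square_integrable[OF assms(1)] xm mm
    by (auto intro!: has_bochner_integral_add has_bochner_integral_diff
        has_bochner_integral_integrable)
  moreover have "(\<lambda>\<omega>. \<eta> * x (Suc t) i \<omega> * m (Suc t) i \<omega>)
      = (\<lambda>\<omega>. \<eta> * x t i \<omega> * m (Suc t) i \<omega> - \<eta>^2 * m (Suc t) i \<omega>^2)"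
    using assms by (simp add: x_step power2_eq_square algebra_simps)
  then have "has_bochner_integral M (\<lambda>\<omega>. \<eta> * x (Suc t) i \<omega> * m (Suc t) i \<omega>) (p - q)"
    using xm mm by (simp add: has_bochner_integral_diff)
  ultimately show ?thesis
    using mm by (simp add: Wmat_def has_bochner_integral_iff)
qed

theorem Wmat_Suc:
  assumes "i < d"
  shows "Wmat M \<eta> x m i (Suc t) =
      Amat \<eta> \<beta> (lam i) ** Wmat M \<eta> x m i t ** transpose (Amat \<eta> \<beta> (lam i))
      + (\<eta>^2 * ((lam i)^2 * (Wmat M \<eta> x m i t $ 1 $ 1)
                 + (\<Sum>j<d. (lam j)^2 * (Wmat M \<eta> x m j t $ 1 $ 1)))) *\<^sub>R Qmat"
proof -
  define a where "a = expectation (\<lambda>\<omega>. x t i \<omega>^2)"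
  define b where "b = expectation (\<lambda>\<omega>. \<eta> * x t i \<omega> * m t i \<omega>)"
  define c where "c = expectation (\<lambda>\<omega>. \<eta>^2 * m t i \<omega>^2)"
  define s where "s = \<eta>^2 * (lam i^2 * a + (\<Sum>j<d. lam j^2 * expectation (\<lambda>\<omega>. x t j \<omega>^2)))"
  define p where "p = \<eta> * lam i * a + \<beta> * b"
  define q where "q = (\<eta> * lam i)^2 * a + 2 * \<eta> * lam i * \<beta> * b + \<beta>^2 * c + s"
  have xm: "has_bochner_integral M (\<lambda>\<omega>. \<eta> * x t i \<omega> * m (Suc t) i \<omega>) p"
    using has_bochner_integral_x_m_Suc[OF state_square_integrable assms]
    by (auto simp: has_bochner_integral_iff p_def a_def b_def algebra_simps)
  have mm: "has_bochner_integral M (\<lambda>\<omega>. \<eta>^2 * m (Suc t) i \<omega>^2) q"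
    using has_bochner_integral_m_Suc_sq[OF state_square_integrable assms]
    by (auto simp: has_bochner_integral_iff q_def s_def a_def b_def c_def power2_eq_square
        algebra_simps)
  have "Wmat M \<eta> x m i (Suc t) = mat2 (a - 2 * p + q) (p - q) (p - q) q"
    unfolding a_def by (rule Wmat_Suc_eq_mat2[OF assms xm mm])
  also have "\<dots> = Amat \<eta> \<beta> (lam i) ** mat2 a b b c ** transpose (Amat \<eta> \<beta> (lam i)) + s *\<^sub>R Qmat"
    by (rule Amat_congruence[symmetric]) (simp_all add: p_def q_def)
  also have "mat2 a b b c = Wmat M \<eta> x m i t"
    by (simp add: Wmat_def a_def b_def c_def)
  also have "s = \<eta>^2 * ((lam i)^2 * (Wmat M \<eta> x m i t $ 1 $ 1)
                 + (\<Sum>j<d. (lam j)^2 * (Wmat M \<eta> x m j t $ 1 $ 1)))"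
    by (simp add: s_def a_def Wmat_def mat2_def)
  finally show ?thesis .
qed

end

theorem lemmaA1:
  fixes M :: "'a measure" and d :: nat and lam :: "nat \<Rightarrow> real"
    and \<eta> \<beta> \<mu> :: real
    and x m u :: "nat \<Rightarrow> nat \<Rightarrow> 'a \<Rightarrow> real"
  assumes P: "prob_space M"
    and lam_nonneg: "\<And>i. i < d \<Longrightarrow> lam i \<ge> 0"
    and lam_nonzero: "\<exists>i<d. lam i \<noteq> 0"
    and eta: "\<eta> > 0" and beta: "0 \<le> \<beta>" "\<beta> < 1" and mu: "\<mu> > 0"
    and x0_meas: "\<And>i. i < d \<Longrightarrow> x 0 i \<in> borel_measurable M"
    and m0_meas: "\<And>i. i < d \<Longrightarrow> m 0 i \<in> borel_measurable M"
    and x0_sq: "\<And>i. i < d \<Longrightarrow> integrable M (\<lambda>\<omega>. (x 0 i \<omega>)^2)"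
    and m0_sq: "\<And>i. i < d \<Longrightarrow> integrable M (\<lambda>\<omega>. (m 0 i \<omega>)^2)"
    and u_normal: "\<And>t i. i < d \<Longrightarrow>
          distributed M lborel (u t i) (\<lambda>z. ennreal (std_normal_density z))"
    and u_coord_indep: "\<And>t. prob_space.indep_vars M (\<lambda>_. borel) (u t) {..<d}"
    and u_iid: "prob_space.indep_vars M (\<lambda>_. PiM {..<d} (\<lambda>_. borel))
                  (\<lambda>t \<omega>. \<lambda>i\<in>{..<d}. u t i \<omega>) UNIV"
    and u_indep_state: "\<And>t. prob_space.indep_var M
          (PiM {..<d} (\<lambda>_. borel)) (\<lambda>\<omega>. \<lambda>i\<in>{..<d}. u t i \<omega>)
          (PiM {..<2*d} (\<lambda>_. borel))
          (\<lambda>\<omega>. \<lambda>k\<in>{..<2*d}. if k < d then x t k \<omega> else m t (k - d) \<omega>)"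
    and m_step: "\<And>t i \<omega>. i < d \<Longrightarrow>
          m (Suc t) i \<omega> = \<beta> * m t i \<omega>
            + (fquad d lam (\<lambda>j. x t j \<omega> + \<mu> * u t j \<omega>)
               - fquad d lam (\<lambda>j. x t j \<omega> - \<mu> * u t j \<omega>)) / (2 * \<mu>) * u t i \<omega>"
    and x_step: "\<And>t i \<omega>. i < d \<Longrightarrow> x (Suc t) i \<omega> = x t i \<omega> - \<eta> * m (Suc t) i \<omega>"
  shows "\<forall>t. \<forall>i<d.
    Wmat M \<eta> x m i (Suc t) =
      Amat \<eta> \<beta> (lam i) ** Wmat M \<eta> x m i t ** transpose (Amat \<eta> \<beta> (lam i))
      + (\<eta>^2 * ((lam i)^2 * (Wmat M \<eta> x m i t $ 1 $ 1)
                 + (\<Sum>j<d. (lam j)^2 * (Wmat M \<eta> x m j t $ 1 $ 1)))) *\<^sub>R Qmat"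
proof -
  interpret zo_gdm_quadratic M d lam \<eta> \<beta> \<mu> x m u
    using P mu x0_meas m0_meas x0_sq m0_sq u_normal u_coord_indep u_indep_state m_step x_step
    by (intro zo_gdm_quadratic.intro zo_gdm_quadratic_axioms.intro) auto
  show ?thesis
    using Wmat_Suc by blast
qed

end
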